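(* Let $n\ge1$, $s\in\{1,\dots,n\}$ and let $C\in\mathbb{R}^{n\times n}$ be symmetric positive definite. For all $t_1,t_2$ with $0<t_1\le t_2\le\lambda_{\min}(C)$, $\hat z^D(t_1)\ge\hat z^D(t_2)$.
   Context: $\lambda_{\min}(C)$ is the smallest eigenvalue of $C$. For $0\le t\le\lambda_{\min}(C)$ let $A(t)\in\mathbb{R}^{n\times n}$ be a Cholesky factor of $C-tI$ (so $C-tI=A(t)^\top A(t)$), with $i$-th column $a_i(t)$, and for $x\in[0,1]^n$ let $M_t(x)=\sum_i x_i a_i(t)a_i(t)^\top$. For $t>0$, $\hat z^D(t)=\max\{\log\det(M_t(x)+tI) : x\in[0,1]^n,\ \sum_i x_i=s\}-(n-s)\log(t)$ (natural log). *)

theory Defs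
  imports "HOL-Analysis.Analysis"
begin

text \<open>Matrices are indexed by a finite linearly ordered type 'n, with n = CARD('n).\<close>

definition sym_pos_def_mat :: "real^'n^'n \<Rightarrow> bool" where
  "sym_pos_def_mat C \<longleftrightarrow> transpose C = C \<and> (\<forall>x. x \<noteq> 0 \<longrightarrow> x \<bullet> (C *v x) > 0)"

definition is_eigenvalue :: "real^'n^'n \<Rightarrow> real \<Rightarrow> bool" where
  "is_eigenvalue C l \<longleftrightarrow> (\<exists>v. v \<noteq> 0 \<and> C *v v = l *\<^sub>R v)"

definition lambda_min :: "real^'n^'n \<Rightarrow> real" where
  "lambda_min C = Min {l. is_eigenvalue C l}"

definition cholesky_factor :: "((real, 'n::{finite,linorder}) vec, 'n) vec \<Rightarrow> ((real, 'n) vec, 'n) vec \<Rightarrow> bool" where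
  "cholesky_factor B A \<longleftrightarrow> transpose A ** A = B \<and>
     (\<forall>i j. j < i \<longrightarrow> A $ i $ j = 0) \<and> (\<forall>i. A $ i $ i \<ge> 0)"

definition outer :: "real^'n \<Rightarrow> real^'n^'n" where
  "outer a = (\<chi> i j. a $ i * a $ j)"

definition Mmat :: "real^'n^'n \<Rightarrow> real^'n \<Rightarrow> real^'n^'n" where
  "Mmat A x = (\<Sum>i\<in>UNIV. (x $ i) *\<^sub>R outer (column i A))"

definition zD :: "real^'n^'n \<Rightarrow> nat \<Rightarrow> real \<Rightarrow> real" where
  "zD A s t =
     (SUP x\<in>{x::real^'n. (\<forall>i. 0 \<le> x $ i \<and> x $ i \<le> 1) \<and> (\<Sum>i\<in>UNIV. x $ i) = real s}.
        ln (det (Mmat A x + t *\<^sub>R mat 1)))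
     - (real CARD('n) - real s) * ln t"

end

theory Submission
  imports Defs
begin

(* Writing C - t I = A^T A, one has M_t(x) = A D_x A^T, so Sylvester's determinant identity gives
   det (M_t(x) + t I) = det (t I + D_x (C - t I)) = det (D_v + D_x K) with K = C - t2 I positive
   semidefinite and v = t + (t2 - t) x. The determinant of D_v + D_x K is affine in each v_i with
   nonnegative constant term, so det (D_v + D_x K) / prod v is nonincreasing in v. Comparing
   v = t1 + (t2 - t1) x with v = t2 and bounding sum_i ln v_i from below by concavity of ln yields
   the inequality for every feasible x, hence for the suprema. *)

definition diag_mat :: "'a::zero^'n \<Rightarrow> 'a^'n^'n" where
  "diag_mat v = (\<chi> i j. if i = j then v $ i else 0)"

lemma diag_mat_mult_nth [simp]:
  fixes v :: "'a::semiring_1^'n"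
  shows "(diag_mat v ** M) $ i $ j = v $ i * M $ i $ j"
  by (simp add: diag_mat_def matrix_matrix_mult_def if_distrib if_distribR cong: if_cong)

lemma mult_diag_mat_nth [simp]:
  fixes v :: "'a::semiring_1^'n"
  shows "(M ** diag_mat v) $ i $ j = M $ i $ j * v $ j"
  by (simp add: diag_mat_def matrix_matrix_mult_def if_distrib if_distribR cong: if_cong)

lemma transpose_diag_mat [simp]: "transpose (diag_mat v) = diag_mat v"
  by (simp add: diag_mat_def transpose_def vec_eq_iff)

lemma det_diag_mat: "det (diag_mat (v :: 'a::comm_ring_1^'n)) = (\<Prod>i\<in>UNIV. v $ i)"
  by (subst det_diagonal) (auto simp: diag_mat_def)

lemma continuous_on_det:
  fixes f :: "'a::topological_space \<Rightarrow> real^'n^'n"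
  assumes "continuous_on S f"
  shows "continuous_on S (\<lambda>x. det (f x))"
  unfolding det_def
  by (intro continuous_on_sum continuous_on_mult continuous_on_const continuous_on_prod
      continuous_on_component assms)

lemma det_nonzero_if_ker_trivial:
  fixes M :: "real^'n^'n"
  assumes "\<And>z. M *v z = 0 \<Longrightarrow> z = 0"
  shows "det M \<noteq> 0"
proof -
  obtain B where "B ** M = mat 1"
    using matrix_left_invertible_ker[of M] assms by blast
  then have "det B * det M = 1"
    by (metis det_I det_mul)
  then show ?thesis
    by auto
qed

lemma det_pos_if_pos_definite:
  fixes M :: "real^'n^'n"
  assumes pd: "\<And>z. z \<noteq> 0 \<Longrightarrow> 0 < z \<bullet> (M *v z)"
  shows "det M > 0"
proof (rule ccontr)
  let ?H = "\<lambda>u::real. u *\<^sub>R M + (1 - u) *\<^sub>R mat 1"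
  assume "\<not> det M > 0"
  then have "det (?H 1) \<le> 0"
    by simp
  moreover have "continuous_on {0..1} (\<lambda>u. det (?H u))"
    by (intro continuous_on_det continuous_intros)
  ultimately obtain u where u: "0 \<le> u" "u \<le> 1" "det (?H u) = 0"
    using IVT2'[of "\<lambda>u. det (?H u)" 1 0 0] by auto
  have "z = 0" if "?H u *v z = 0" for z
  proof (rule ccontr)
    assume "z \<noteq> 0"
    have "z \<bullet> (?H u *v z) = u * (z \<bullet> (M *v z)) + (1 - u) * (z \<bullet> z)"
      by (simp add: matrix_vector_mult_add_rdistrib inner_add_right
          flip: scaleR_matrix_vector_assoc)
    also have "\<dots> > 0"
      using u pd[OF \<open>z \<noteq> 0\<close>] \<open>z \<noteq> 0\<close>
      by (cases "u = 0") (auto intro: add_pos_nonneg)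
    finally show False
      using that by simp
  qed
  with u show False
    using det_nonzero_if_ker_trivial by blast
qed

lemma permutes_ge_imp_id:
  fixes p :: "'n::{finite,linorder} \<Rightarrow> 'n"
  assumes p: "p permutes UNIV" and ge: "\<And>i. i \<le> p i"
  shows "p = id"
proof (rule ccontr)
  assume "p \<noteq> id"
  then have ne: "{i. p i \<noteq> i} \<noteq> {}"
    by auto
  define m where "m = Max {i. p i \<noteq> i}"
  have "p m \<noteq> m"
    using Max_in[OF _ ne] m_def by auto
  then have gt: "m < p m"
    using ge[of m] by auto
  have "p (p m) = p m"
  proof (rule ccontr)
    assume "p (p m) \<noteq> p m"
    then have "p m \<le> m"
      unfolding m_def by (intro Max_ge) auto
    with gt show False
      by simp
  qed
  then have "p m = m"
    using permutes_inj[OF p] by (auto dest: injD)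
  with \<open>p m \<noteq> m\<close> show False
    by simp
qed

lemma det_upper_triangular:
  fixes A :: "'a::comm_ring_1^'n::{finite,linorder}^'n::{finite,linorder}"
  assumes upper: "\<And>i j. j < i \<Longrightarrow> A $ i $ j = 0"
  shows "det A = (\<Prod>i\<in>UNIV. A $ i $ i)"
proof -
  have "of_int (sign p) * (\<Prod>i\<in>UNIV. A $ i $ p i) = 0"
    if p: "p \<in> {p. p permutes UNIV} - {id}" for p
  proof -
    obtain i where "p i < i"
      using p permutes_ge_imp_id[of p] by (metis DiffE mem_Collect_eq not_le singletonI)
    then have "\<exists>i\<in>UNIV. A $ i $ p i = 0"
      using upper by blast
    then show ?thesis
      by (simp add: prod_zero)
  qed
  then have "det A = (\<Sum>p\<in>{id}. of_int (sign p) * (\<Prod>i\<in>UNIV. A $ i $ p i))"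
    unfolding det_def by (intro sum.mono_neutral_right) (auto simp: permutes_id)
  then show ?thesis
    by (simp add: sign_id)
qed

lemma matrix_add_rdistrib: "((A :: 'a::semiring_1^'n^'m) + B) ** C = A ** C + B ** C"
  by (simp add: matrix_matrix_mult_def vec_eq_iff sum.distrib algebra_simps)

text \<open>Sylvester's determinant identity, proved by perturbing X into an invertible matrix,
  for which X (tI + YX) = (tI + XY) X, and passing to the limit by continuity.\<close>
lemma det_add_mult_commute:
  fixes X Y :: "real^'n^'n"
  assumes "\<forall>\<^sub>F e in at_right 0. det (X + e *\<^sub>R mat 1) \<noteq> 0"
  shows "det (t *\<^sub>R mat 1 + X ** Y) = det (t *\<^sub>R mat 1 + Y ** X)"
proof -
  define Xe where "Xe e = X + e *\<^sub>R mat 1" for e :: real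
  define g where "g e = det (t *\<^sub>R mat 1 + Xe e ** Y) - det (t *\<^sub>R mat 1 + Y ** Xe e)" for e
  have "\<forall>\<^sub>F e in at_right 0. g e = 0"
    using assms
  proof eventually_elim
    case (elim e)
    have "Xe e ** (t *\<^sub>R mat 1 + Y ** Xe e) = (t *\<^sub>R mat 1 + Xe e ** Y) ** Xe e"
      by (simp add: matrix_add_ldistrib matrix_add_rdistrib matrix_mul_assoc matrix_scalar_ac
          flip: scalar_matrix_assoc)
    then have "det (Xe e) * det (t *\<^sub>R mat 1 + Y ** Xe e)
        = det (t *\<^sub>R mat 1 + Xe e ** Y) * det (Xe e)"
      by (metis det_mul)
    with elim show ?case
      unfolding g_def Xe_def by simp
  qed
  then have "(g \<longlongrightarrow> 0) (at_right 0)"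
    by (rule tendsto_eventually)
  moreover have "continuous_on UNIV g"
    unfolding g_def Xe_def
    by (simp add: matrix_add_ldistrib matrix_add_rdistrib matrix_scalar_ac continuous_on_det
        continuous_intros flip: scalar_matrix_assoc)
  then have "(g \<longlongrightarrow> g 0) (at_right 0)"
    by (simp add: continuous_on_def filterlim_at_split)
  ultimately have "g 0 = 0"
    using tendsto_unique[OF trivial_limit_at_right_real] by blast
  then show ?thesis
    unfolding g_def Xe_def by simp
qed

lemma cholesky_factor_det_add_pos:
  assumes "cholesky_factor B A" "0 < e"
  shows "0 < det (A + e *\<^sub>R mat 1)"
proof -
  have "det (A + e *\<^sub>R mat 1) = (\<Prod>i\<in>UNIV. A $ i $ i + e)"
    using assms(1) by (subst det_upper_triangular) (auto simp: cholesky_factor_def mat_def)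
  also have "\<dots> > 0"
    using assms by (intro prod_pos) (auto simp: cholesky_factor_def add_nonneg_pos)
  finally show ?thesis .
qed

lemma det_mat1_add_gram_pos:
  fixes G :: "real^'n^'m"
  shows "0 < det (mat 1 + transpose G ** G)"
proof (rule det_pos_if_pos_definite)
  fix z :: "real^'n" assume "z \<noteq> 0"
  have "z \<bullet> (transpose G *v (G *v z)) = (G *v z) \<bullet> (G *v z)"
    by (metis dot_lmul_matrix inner_commute transpose_matrix_vector)
  then have "z \<bullet> ((mat 1 + transpose G ** G) *v z) = z \<bullet> z + (G *v z) \<bullet> (G *v z)"
    by (simp add: matrix_vector_mult_add_rdistrib inner_add_right flip: matrix_vector_mul_assoc)
  then show "0 < z \<bullet> ((mat 1 + transpose G ** G) *v z)"
    using \<open>z \<noteq> 0\<close> by (simp add: add_pos_nonneg)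
qed

text \<open>With u = sqrt (d / e), the matrix is diag e (I + diag u diag u B^T B), and Sylvester's
  identity moves one factor diag u to the right, producing the Gram matrix of B diag u.\<close>
lemma det_diag_add_diag_mult_gram_pos:
  fixes B :: "real^'n^'m"
  assumes e: "\<And>i. 0 < e $ i" and d: "\<And>i. 0 \<le> d $ i"
  shows "0 < det (diag_mat e + diag_mat d ** (transpose B ** B))"
proof -
  define u where "u = (\<chi> i. sqrt (d $ i / e $ i))"
  let ?K = "transpose B ** B"
  have u2: "e $ i * u $ i * u $ i = d $ i" for i
    using e[of i] d[of i] by (simp add: u_def mult.assoc)
  have factor: "diag_mat e + diag_mat d ** ?K = diag_mat e ** (mat 1 + diag_mat u ** (diag_mat u ** ?K))"
    by (simp add: matrix_add_ldistrib vec_eq_iff u2 mult.assoc[symmetric])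
  have "\<forall>\<^sub>F \<epsilon> in at_right 0. det (diag_mat u + \<epsilon> *\<^sub>R mat 1) \<noteq> 0"
  proof (rule eventually_at_rightI[of 0 1])
    fix \<epsilon> :: real assume "\<epsilon> \<in> {0<..<1}"
    then have "0 < (\<Prod>i\<in>UNIV. u $ i + \<epsilon>)"
      using e d by (intro prod_pos add_nonneg_pos) (auto simp: u_def less_imp_le)
    moreover have "det (diag_mat u + \<epsilon> *\<^sub>R mat 1) = (\<Prod>i\<in>UNIV. u $ i + \<epsilon>)"
      by (subst det_diagonal) (auto simp: diag_mat_def mat_def)
    ultimately show "det (diag_mat u + \<epsilon> *\<^sub>R mat 1) \<noteq> 0"
      by linarith
  qed simp
  then have "det (mat 1 + diag_mat u ** (diag_mat u ** ?K))
      = det (mat 1 + transpose (B ** diag_mat u) ** (B ** diag_mat u))"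
    using det_add_mult_commute[of "diag_mat u" 1 "diag_mat u ** ?K"]
    by (simp add: matrix_transpose_mul matrix_mul_assoc)
  then have "0 < det (mat 1 + diag_mat u ** (diag_mat u ** ?K))"
    using det_mat1_add_gram_pos by simp
  moreover have "0 < det (diag_mat e)"
    using e by (simp add: det_diag_mat prod_pos)
  ultimately show ?thesis
    unfolding factor det_mul by simp
qed

lemma Mmat_eq: "Mmat A x = A ** diag_mat x ** transpose A"
proof -
  have "(A ** diag_mat x ** transpose A) $ i $ j = (\<Sum>k\<in>UNIV. A $ i $ k * x $ k * A $ j $ k)"
    for i j
    by (subst matrix_matrix_mult_def) (simp add: transpose_def)
  then show ?thesis
    by (simp add: vec_eq_iff Mmat_def outer_def column_def sum_component mult_ac)
qed

lemma det_Mmat_add_cholesky: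
  fixes A :: "real^'n::{finite,linorder}^'n::{finite,linorder}"
  assumes "cholesky_factor (C - t *\<^sub>R mat 1) A"
  shows "det (Mmat A x + t *\<^sub>R mat 1) = det (t *\<^sub>R mat 1 + diag_mat x ** (C - t *\<^sub>R mat 1))"
proof -
  have "\<forall>\<^sub>F e in at_right 0. det (A + e *\<^sub>R mat 1) \<noteq> 0"
    using cholesky_factor_det_add_pos[OF assms]
    by (auto intro: eventually_at_rightI[of 0 1] simp: less_imp_neq[symmetric])
  then have "det (t *\<^sub>R mat 1 + A ** (diag_mat x ** transpose A))
      = det (t *\<^sub>R mat 1 + (diag_mat x ** transpose A) ** A)"
    by (rule det_add_mult_commute)
  with assms show ?thesis
    by (simp add: Mmat_eq matrix_mul_assoc add.commute cholesky_factor_def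
        flip: matrix_mul_assoc)
qed

lemma scaleR_mat1_add_diag_mult_shift:
  "t *\<^sub>R mat 1 + diag_mat x ** (C - t *\<^sub>R mat 1)
     = diag_mat (\<chi> j. t + (t' - t) * x $ j) + diag_mat x ** (C - t' *\<^sub>R mat 1)"
  by (simp add: vec_eq_iff) (simp add: diag_mat_def mat_def algebra_simps)

lemma det_diag_add_affine_coord:
  fixes N :: "real^'n^'n"
  obtains \<alpha> \<beta> where "\<And>e. det (diag_mat (\<chi> j. if j = i then e else v $ j) + N) = e * \<alpha> + \<beta>"
proof -
  define R where "R = diag_mat (\<chi> j. if j = i then 0 else v $ j) + N"
  have "det (diag_mat (\<chi> j. if j = i then e else v $ j) + N)
      = e * det (\<chi> k. if k = i then axis i 1 else R $ k) + det (\<chi> k. if k = i then N $ i else R $ k)"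
    for e
  proof -
    have "diag_mat (\<chi> j. if j = i then e else v $ j) + N
        = (\<chi> k. if k = i then e *s axis i 1 + N $ i else R $ k)"
      by (simp add: vec_eq_iff R_def diag_mat_def axis_def)
    then show ?thesis
      by (simp add: det_row_add[of i "\<lambda>k. e *s axis i 1" "\<lambda>k. N $ i" "\<lambda>k. R $ k"]
          det_row_mul[of i e "\<lambda>k. axis i 1" "\<lambda>k. R $ k"])
  qed
  then show ?thesis
    using that by blast
qed

text \<open>Since the determinant is affine in v$i, the ratio is \<alpha>/P + \<beta>/(v$i P), and \<beta> \<ge> 0
  because the determinant stays nonnegative as v$i tends to 0.\<close>
lemma det_diag_add_div_prod_antimono_coord:
  fixes N :: "real^'n^'n"
  assumes nonneg: "\<And>u. (\<And>j. 0 < u $ j) \<Longrightarrow> 0 \<le> det (diag_mat u + N)"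
    and v: "\<And>j. 0 < v $ j" and agree: "\<And>j. j \<noteq> i \<Longrightarrow> w $ j = v $ j" and le: "v $ i \<le> w $ i"
  shows "det (diag_mat w + N) / (\<Prod>j\<in>UNIV. w $ j) \<le> det (diag_mat v + N) / (\<Prod>j\<in>UNIV. v $ j)"
proof -
  define upd where "upd e = (\<chi> j. if j = i then e else v $ j)" for e
  obtain \<alpha> \<beta> where aff: "\<And>e. det (diag_mat (upd e) + N) = e * \<alpha> + \<beta>"
    using det_diag_add_affine_coord unfolding upd_def by metis
  define P where "P = (\<Prod>j\<in>UNIV - {i}. v $ j)"
  have P: "0 < P"
    unfolding P_def using v by (simp add: prod_pos)
  have prod_upd: "(\<Prod>j\<in>UNIV. upd e $ j) = e * P" for e
    by (simp add: prod.remove[of UNIV i] upd_def P_def)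
  have "v = upd (v $ i)" "w = upd (w $ i)"
    using agree by (auto simp: upd_def vec_eq_iff)
  have "\<forall>\<^sub>F e in at_right 0. 0 \<le> e * \<alpha> + \<beta>"
    using v by (auto intro!: eventually_at_rightI[of 0 1] simp: aff[symmetric] upd_def nonneg)
  moreover have "((\<lambda>e. e * \<alpha> + \<beta>) \<longlongrightarrow> \<beta>) (at_right 0)"
    by (auto intro!: tendsto_eq_intros)
  ultimately have "0 \<le> \<beta>"
    using tendsto_lowerbound[OF _ _ trivial_limit_at_right_real] by blast
  have ratio: "det (diag_mat (upd e) + N) / (\<Prod>j\<in>UNIV. upd e $ j) = \<alpha> / P + \<beta> / (e * P)"
    if "0 < e" for e
    using that P by (simp add: aff prod_upd add_divide_distrib)
  have "\<beta> / (w $ i * P) \<le> \<beta> / (v $ i * P)"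
    using \<open>0 \<le> \<beta>\<close> v[of i] le P by (intro divide_left_mono mult_right_mono mult_pos_pos) auto
  then show ?thesis
    using ratio[of "v $ i"] ratio[of "w $ i"] v[of i] le
    by (simp flip: \<open>v = upd (v $ i)\<close> \<open>w = upd (w $ i)\<close>)
qed

lemma det_diag_add_div_prod_antimono:
  fixes N :: "real^'n^'n"
  assumes nonneg: "\<And>u. (\<And>j. 0 < u $ j) \<Longrightarrow> 0 \<le> det (diag_mat u + N)"
    and v: "\<And>j. 0 < v $ j" and le: "\<And>j. v $ j \<le> w $ j"
  shows "det (diag_mat w + N) / (\<Prod>j\<in>UNIV. w $ j) \<le> det (diag_mat v + N) / (\<Prod>j\<in>UNIV. v $ j)"
proof -
  define mix where "mix S = (\<chi> j. if j \<in> S then w $ j else v $ j)" for S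
  have "det (diag_mat (mix S) + N) / (\<Prod>j\<in>UNIV. mix S $ j)
      \<le> det (diag_mat v + N) / (\<Prod>j\<in>UNIV. v $ j)" if "finite S" for S
    using that
  proof (induction S rule: finite_induct)
    case empty
    then show ?case
      by (simp add: mix_def)
  next
    case (insert i S)
    have "det (diag_mat (mix (insert i S)) + N) / (\<Prod>j\<in>UNIV. mix (insert i S) $ j)
        \<le> det (diag_mat (mix S) + N) / (\<Prod>j\<in>UNIV. mix S $ j)"
      using v le insert.hyps
      by (intro det_diag_add_div_prod_antimono_coord[OF nonneg, of _ i])
        (auto simp: mix_def intro: less_le_trans)
    with insert.IH show ?case
      by linarith
  qed
  moreover have "mix UNIV = w"
    by (simp add: mix_def vec_eq_iff)
  ultimately show ?thesis
    by (metis finite)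
qed

lemma ln_det_Mmat_add_diff_antimono:
  fixes C A1 A2 :: "real^'n::{finite,linorder}^'n::{finite,linorder}"
  assumes ch1: "cholesky_factor (C - t1 *\<^sub>R mat 1) A1"
    and ch2: "cholesky_factor (C - t2 *\<^sub>R mat 1) A2"
    and t: "0 < t1" "t1 \<le> t2"
    and x: "\<And>i. 0 \<le> x $ i \<and> x $ i \<le> 1" and sum_x: "(\<Sum>i\<in>UNIV. x $ i) = real s"
  shows "ln (det (Mmat A2 x + t2 *\<^sub>R mat 1)) - (real CARD('n) - real s) * ln t2
       \<le> ln (det (Mmat A1 x + t1 *\<^sub>R mat 1)) - (real CARD('n) - real s) * ln t1"
proof -
  let ?N = "diag_mat x ** (C - t2 *\<^sub>R mat 1)"
  define v where "v = (\<chi> j. t1 + (t2 - t1) * x $ j)"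
  define w where "w = (\<chi> j::'n. t2)"
  have v_pos: "0 < v $ j" for j
    using t x[of j] by (simp add: v_def add_pos_nonneg)
  have v_le_w: "v $ j \<le> w $ j" for j
    using t x[of j] mult_left_mono[of "x $ j" 1 "t2 - t1"] by (simp add: v_def w_def algebra_simps)
  have det_pos: "0 < det (diag_mat u + ?N)" if "\<And>j. 0 < u $ j" for u
    using det_diag_add_diag_mult_gram_pos[of u x A2] that x ch2
    by (simp add: cholesky_factor_def)
  have Q1: "det (Mmat A1 x + t1 *\<^sub>R mat 1) = det (diag_mat v + ?N)"
    unfolding det_Mmat_add_cholesky[OF ch1] scaleR_mat1_add_diag_mult_shift[where t' = t2] v_def ..
  have Q2: "det (Mmat A2 x + t2 *\<^sub>R mat 1) = det (diag_mat w + ?N)"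
    unfolding det_Mmat_add_cholesky[OF ch2] scaleR_mat1_add_diag_mult_shift[where t' = t2] w_def
    by simp
  have "det (diag_mat w + ?N) / (\<Prod>j\<in>UNIV. w $ j) \<le> det (diag_mat v + ?N) / (\<Prod>j\<in>UNIV. v $ j)"
    using det_pos v_pos v_le_w by (intro det_diag_add_div_prod_antimono) (auto intro: less_imp_le)
  moreover have "ln (\<Prod>j\<in>UNIV. v $ j) = (\<Sum>j\<in>UNIV. ln (v $ j))"
    using v_pos by (simp add: ln_prod less_imp_neq[symmetric])
  ultimately have "ln (det (diag_mat w + ?N)) - real CARD('n) * ln t2
      \<le> ln (det (diag_mat v + ?N)) - (\<Sum>j\<in>UNIV. ln (v $ j))"
    using det_pos[of v] det_pos[of w] v_pos t
    by (simp add: ln_divide_pos prod_pos w_def ln_realpow flip: ln_le_cancel_iff)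
  moreover have "(1 - x $ j) * ln t1 + x $ j * ln t2 \<le> ln (v $ j)" for j
    using concave_onD[OF ln_concave, of "x $ j" t1 t2] x[of j] t by (simp add: v_def algebra_simps)
  then have "(real CARD('n) - real s) * ln t1 + real s * ln t2 \<le> (\<Sum>j\<in>UNIV. ln (v $ j))"
    using sum_mono[of UNIV "\<lambda>j. (1 - x $ j) * ln t1 + x $ j * ln t2" "\<lambda>j. ln (v $ j)"]
    by (simp add: sum.distrib sum_subtractf sum_x flip: sum_distrib_right)
  ultimately show ?thesis
    unfolding Q1 Q2 by (simp add: algebra_simps)
qed

lemma compact_capped_simplex:
  "compact {x :: real^'n. (\<forall>i. 0 \<le> x $ i \<and> x $ i \<le> 1) \<and> (\<Sum>i\<in>UNIV. x $ i) = r}"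
proof -
  have "bounded {x :: real^'n. (\<forall>i. 0 \<le> x $ i \<and> x $ i \<le> 1) \<and> (\<Sum>i\<in>UNIV. x $ i) = r}"
    by (rule bounded_subset[OF bounded_cbox[of 0 1]]) (auto simp: mem_box_cart)
  moreover have "closed {x :: real^'n. (\<forall>i. 0 \<le> x $ i \<and> x $ i \<le> 1) \<and> (\<Sum>i\<in>UNIV. x $ i) = r}"
    by (intro closed_Collect_conj closed_Collect_all closed_Collect_le closed_Collect_eq
        continuous_intros)
  ultimately show ?thesis
    by (simp add: compact_eq_bounded_closed)
qed

lemma bdd_above_ln_det_Mmat_add:
  fixes A :: "real^'n::{finite,linorder}^'n::{finite,linorder}"
  assumes ch: "cholesky_factor (C - t *\<^sub>R mat 1) A" and "0 < t"
    and S: "compact S" "\<And>x i. x \<in> S \<Longrightarrow> 0 \<le> x $ i"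
  shows "bdd_above ((\<lambda>x. ln (det (Mmat A x + t *\<^sub>R mat 1))) ` S)"
proof -
  have pos: "0 < det (Mmat A x + t *\<^sub>R mat 1)" if "x \<in> S" for x
    using det_diag_add_diag_mult_gram_pos[of "\<chi> j. t" x A] \<open>0 < t\<close> S(2)[OF that] ch
    unfolding det_Mmat_add_cholesky[OF ch] scaleR_mat1_add_diag_mult_shift[where t' = t]
    by (simp add: cholesky_factor_def)
  have "continuous_on S (\<lambda>x. det (Mmat A x + t *\<^sub>R mat 1))"
    unfolding Mmat_def by (intro continuous_on_det continuous_intros)
  then have "continuous_on S (\<lambda>x. ln (det (Mmat A x + t *\<^sub>R mat 1)))"
    using pos by (intro continuous_on_ln) (metis less_irrefl)+
  then show ?thesis
    using S(1) by (metis bounded_imp_bdd_above compact_continuous_image compact_imp_bounded)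
qed

theorem proposition3:
  fixes C A1 A2 :: "((real, 'n::{finite,linorder}) vec, 'n) vec" and s :: nat and t1 t2 :: real
  assumes "sym_pos_def_mat C"
    and "1 \<le> s" and "s \<le> CARD('n)"
    and "0 < t1" and "t1 \<le> t2" and "t2 \<le> lambda_min C"
    and "cholesky_factor (C - t1 *\<^sub>R mat 1) A1"
    and "cholesky_factor (C - t2 *\<^sub>R mat 1) A2"
  shows "zD A1 s t1 \<ge> zD A2 s t2"
proof -
  let ?F = "{x :: (real, 'n) vec. (\<forall>i. 0 \<le> x $ i \<and> x $ i \<le> 1) \<and> (\<Sum>i\<in>UNIV. x $ i) = real s}"
  let ?f = "\<lambda>A t x. ln (det (Mmat A x + t *\<^sub>R mat 1))"
  let ?c = "(real CARD('n) - real s) * (ln t2 - ln t1)"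
  have "(\<chi> i. real s / real CARD('n)) \<in> ?F"
    using \<open>s \<le> CARD('n)\<close> by (simp add: divide_le_eq_1)
  then have nonempty: "?F \<noteq> {}"
    by blast
  have bdd: "bdd_above (?f A1 t1 ` ?F)"
    using assms(7,4) compact_capped_simplex by (rule bdd_above_ln_det_Mmat_add) simp
  have "(SUP x\<in>?F. ?f A2 t2 x) \<le> (SUP x\<in>?F. ?f A1 t1 x) + ?c"
  proof (rule cSUP_least[OF nonempty])
    fix x assume x: "x \<in> ?F"
    then have "?f A2 t2 x \<le> ?f A1 t1 x + ?c"
      using ln_det_Mmat_add_diff_antimono[OF assms(7,8,4,5), of x s] by (simp add: algebra_simps)
    with cSUP_upper[OF x bdd] show "?f A2 t2 x \<le> (SUP x\<in>?F. ?f A1 t1 x) + ?c"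
      by linarith
  qed
  then show ?thesis
    unfolding zD_def by (simp add: algebra_simps)
qed

end
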